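(* Let $q$ be a prime power and $d\ge 1$. The general linear group $\mathrm{GL}_d(\mathbb{F}_q)$ is mixable if and only if $q-1$ is a power of $2$.
   Context: A finite group $G$ is mixable if there exist fixed elements $g_1,\dots,g_k\in G$ and independent Bernoulli random variables $\epsilon_i\sim\mathrm{Ber}(p_i)$, $p_i\in[0,1]$, such that the random product $g_1^{\epsilon_1}\cdots g_k^{\epsilon_k}$ is distributed exactly uniformly on $G$. *)

theory Defs
  imports "HOL-Analysis.Analysis" "HOL-Algebra.Group"
begin

text \<open>Product g_0^(e_0) * ... * g_(k-1)^(e_(k-1)) in a monoid, where S is the set of indices i with e_i = 1.\<close>
definition word_prod :: "('g, 'b) monoid_scheme \<Rightarrow> (nat \<Rightarrow> 'g) \<Rightarrow> nat \<Rightarrow> nat set \<Rightarrow> 'g" where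
  "word_prod G gs k S = foldr (\<lambda>i acc. (if i \<in> S then gs i else \<one>\<^bsub>G\<^esub>) \<otimes>\<^bsub>G\<^esub> acc) [0..<k] \<one>\<^bsub>G\<^esub>"

text \<open>A finite group G is mixable if there are g_0..g_(k-1) in G and p_i in [0,1] such that,
  with independent e_i ~ Ber(p_i), the random product is exactly uniform on G.\<close>
definition mixable :: "('g, 'b) monoid_scheme \<Rightarrow> bool" where
  "mixable G \<longleftrightarrow> (\<exists>(k::nat) (gs::nat \<Rightarrow> 'g) (ps::nat \<Rightarrow> real).
      (\<forall>i<k. gs i \<in> carrier G \<and> 0 \<le> ps i \<and> ps i \<le> 1) \<and>
      (\<forall>x\<in>carrier G.
         (\<Sum>S\<in>Pow {..<k}. if word_prod G gs k S = x
                             then (\<Prod>i<k. if i \<in> S then ps i else 1 - ps i) else 0)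
         = 1 / real (card (carrier G))))"

definition GL_group :: "('a::field ^ 'n ^ 'n) monoid" where
  "GL_group = \<lparr>carrier = {A. invertible A}, mult = (**), one = mat 1\<rparr>"

end

theory Submission
  imports Defs "HOL-Algebra.Multiplicative_Group" "HOL-Algebra.Algebraic_Closure_Type"
begin

text \<open>
  Necessity: if \<open>q - 1\<close> is not a power of 2 it has an odd divisor \<open>r > 1\<close>, and a character of
  order \<open>r\<close> of the cyclic group \<open>F\<^sub>q\<^sup>*\<close>, composed with the determinant, is a character \<open>f\<close> of
  \<open>GL\<^sub>d(F\<^sub>q)\<close> with odd order values.  For a random product of letters \<open>g\<^sub>i\<close>, each taken with
  probability \<open>p\<^sub>i\<close>, the expectation of \<open>f\<close> is the product of the factors \<open>1 - p\<^sub>i + p\<^sub>i f(g\<^sub>i)\<close>,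
  none of which vanishes; for the uniform distribution it is the average of a nontrivial
  character, which is \<open>0\<close>.

  Sufficiency: if \<open>q - 1 = 2\<^sup>m\<close>, the \<open>m\<close> binary digits of a discrete logarithm give a word that
  rescales a coordinate by a uniformly random unit.  Together with transvections and coordinate
  swaps, taken with suitable probabilities, such words move \<open>e\<^sub>c\<close> to a uniformly random point of
  its orbit under the pointwise stabiliser of \<open>{e\<^sub>s | s \<in> F}\<close>, for any \<open>c \<notin> F\<close>, using only
  letters from that stabiliser.  Concatenating these words along the chain of stabilisers
  \<open>GL = Stab(\<emptyset>) \<supseteq> \<dots> \<supseteq> Stab(all indices) = 1\<close> gives a uniformly distributed product.
\<close>

section \<open>Random words in a group\<close>

text \<open>For \<open>w = [(g\<^sub>1, p\<^sub>1), \<dots>, (g\<^sub>k, p\<^sub>k)]\<close>, \<open>orbit_dist G act w \<mu> x\<close> is the probability that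
  \<open>g\<^sub>1\<^bsup>\<epsilon>\<^sub>1\<^esup> \<cdots> g\<^sub>k\<^bsup>\<epsilon>\<^sub>k\<^esup>\<close> maps a \<open>\<mu>\<close>-distributed point to \<open>x\<close>, for independent
  \<open>\<epsilon>\<^sub>i \<sim> Ber(p\<^sub>i)\<close>; \<open>word_dist\<close> is the law of the product itself.\<close>

fun orbit_dist ::
  "('g, 'b) monoid_scheme \<Rightarrow> ('g \<Rightarrow> 'x \<Rightarrow> 'x) \<Rightarrow> ('g \<times> real) list \<Rightarrow> ('x \<Rightarrow> real) \<Rightarrow> 'x \<Rightarrow> real"
  where
    "orbit_dist G act [] \<mu> x = \<mu> x"
  | "orbit_dist G act ((g, p) # w) \<mu> x =
       (1 - p) * orbit_dist G act w \<mu> x + p * orbit_dist G act w \<mu> (act (inv\<^bsub>G\<^esub> g) x)"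

definition word_dist :: "('g, 'b) monoid_scheme \<Rightarrow> ('g \<times> real) list \<Rightarrow> 'g \<Rightarrow> real" where
  "word_dist G w = orbit_dist G (\<otimes>\<^bsub>G\<^esub>) w (\<lambda>x. of_bool (x = \<one>\<^bsub>G\<^esub>))"

lemma word_dist_Nil [simp]: "word_dist G [] x = of_bool (x = \<one>\<^bsub>G\<^esub>)"
  by (simp add: word_dist_def)

lemma word_dist_Cons [simp]:
  "word_dist G ((g, p) # w) x = (1 - p) * word_dist G w x + p * word_dist G w (inv\<^bsub>G\<^esub> g \<otimes>\<^bsub>G\<^esub> x)"
  by (simp add: word_dist_def)

lemma orbit_dist_append: "orbit_dist G act (w1 @ w2) \<mu> = orbit_dist G act w1 (orbit_dist G act w2 \<mu>)"
proof (induction w1)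
  case (Cons gp w1)
  then show ?case by (cases gp) (simp add: fun_eq_iff)
qed (simp add: fun_eq_iff)

lemma orbit_dist_linear:
  "orbit_dist G act w (\<lambda>x. a * \<mu> x + b * \<nu> x) x = a * orbit_dist G act w \<mu> x + b * orbit_dist G act w \<nu> x"
proof (induction w arbitrary: x)
  case (Cons gp w)
  then show ?case by (cases gp) (simp add: algebra_simps)
qed simp

lemma orbit_dist_invariant:
  assumes "\<And>g x. g \<in> fst ` set w \<Longrightarrow> \<mu> (act (inv\<^bsub>G\<^esub> g) x) = \<mu> x"
  shows "orbit_dist G act w \<mu> x = \<mu> x"
  using assms
proof (induction w arbitrary: x)
  case (Cons gp w)
  then show ?case by (cases gp) (simp add: algebra_simps)
qed simp

lemma word_prod_Suc:
  "word_prod G gs (Suc k) S =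
     (if 0 \<in> S then gs 0 else \<one>\<^bsub>G\<^esub>) \<otimes>\<^bsub>G\<^esub> word_prod G (\<lambda>i. gs (Suc i)) k {i. Suc i \<in> S}"
proof -
  have "[0..<Suc k] = 0 # map Suc [0..<k]"
    by (simp add: map_Suc_upt upt_conv_Cons)
  then show ?thesis
    unfolding word_prod_def by (simp add: foldr_map comp_def del: upt_Suc)
qed

lemma (in monoid) word_prod_closed:
  "(\<And>i. i < k \<Longrightarrow> gs i \<in> carrier G) \<Longrightarrow> word_prod G gs k S \<in> carrier G"
proof (induction k arbitrary: gs S)
  case 0
  then show ?case by (simp add: word_prod_def)
next
  case (Suc k)
  then show ?case by (simp add: word_prod_Suc)
qed

lemma sum_Pow_lessThan_Suc:
  "(\<Sum>S\<in>Pow {..<Suc k}. f S) =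
     (\<Sum>T\<in>Pow {..<k}. f (Suc ` T)) + (\<Sum>T\<in>Pow {..<k}. f (insert 0 (Suc ` T)))"
proof -
  have Pow_Suc: "Pow {..<Suc k} = image Suc ` Pow {..<k} \<union> (\<lambda>T. insert 0 (Suc ` T)) ` Pow {..<k}"
    unfolding lessThan_Suc_eq_insert_0 Pow_insert image_Pow_surj[OF refl, symmetric] image_image ..
  have inj_Suc: "inj_on (image Suc) (Pow {..<k})"
    by (simp add: inj_on_image_Pow)
  have inj_0_Suc: "inj_on (\<lambda>T. insert 0 (Suc ` T)) (Pow {..<k})"
    by (rule inj_onI) (auto simp: set_eq_iff)
  show ?thesis
    unfolding Pow_Suc
    by (subst sum.union_disjoint) (auto simp: sum.reindex inj_Suc inj_0_Suc o_def)
qed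

lemma (in group) word_dist_eq_sum_Pow:
  assumes "\<And>i. i < k \<Longrightarrow> gs i \<in> carrier G" and "x \<in> carrier G"
  shows "(\<Sum>S\<in>Pow {..<k}. if word_prod G gs k S = x
            then (\<Prod>i<k. if i \<in> S then ps i else 1 - ps i) else 0)
         = word_dist G (map (\<lambda>i. (gs i, ps i)) [0..<k]) x"
  using assms
proof (induction k arbitrary: gs ps x)
  case 0
  then show ?case by (auto simp: word_prod_def)
next
  case (Suc k)
  define gs' where "gs' = (\<lambda>i. gs (Suc i))"
  define P where "P T = (\<Prod>i<k. if i \<in> T then ps (Suc i) else 1 - ps (Suc i))" for T
  define w where "w = map (\<lambda>i. (gs' i, ps (Suc i))) [0..<k]"
  have gs': "\<And>i. i < k \<Longrightarrow> gs' i \<in> carrier G" and g0: "gs 0 \<in> carrier G"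
    using Suc.prems by (auto simp: gs'_def)
  have "[0..<Suc k] = 0 # map Suc [0..<k]"
    by (simp add: map_Suc_upt upt_conv_Cons)
  then have word_Suc: "map (\<lambda>i. (gs i, ps i)) [0..<Suc k] = (gs 0, ps 0) # w"
    by (simp add: w_def gs'_def)
  have prod_Suc: "(\<Prod>i<Suc k. if i \<in> Suc ` T then ps i else 1 - ps i) = (1 - ps 0) * P T"
    "(\<Prod>i<Suc k. if i \<in> insert 0 (Suc ` T) then ps i else 1 - ps i) = ps 0 * P T" for T
    by (subst prod.lessThan_Suc_shift, simp add: inj_image_mem_iff P_def)+
  have closed: "word_prod G gs' k T \<in> carrier G" for T
    using gs' by (rule word_prod_closed)
  have prod_word_Suc: "word_prod G gs (Suc k) (Suc ` T) = word_prod G gs' k T"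
    "(word_prod G gs (Suc k) (insert 0 (Suc ` T)) = x) \<longleftrightarrow> (word_prod G gs' k T = inv (gs 0) \<otimes> x)"
    for T
    using closed[of T] g0 Suc.prems(2)
    by (simp_all add: word_prod_Suc inj_image_mem_iff gs'_def[symmetric] inv_solve_left eq_commute)
  have IH: "(\<Sum>T\<in>Pow {..<k}. if word_prod G gs' k T = y then P T else 0) = word_dist G w y"
    if "y \<in> carrier G" for y
    unfolding P_def w_def by (rule Suc.IH[OF gs' that])
  have scale: "(\<Sum>T\<in>Pow {..<k}. if Q T then c * P T else 0)
      = c * (\<Sum>T\<in>Pow {..<k}. if Q T then P T else 0)" for Q c
    by (subst sum_distrib_left) (rule sum.cong; simp)
  show ?case
    unfolding sum_Pow_lessThan_Suc word_Suc prod_Suc prod_word_Suc word_dist_Cons scale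
    using g0 Suc.prems(2) by (simp add: IH)
qed

lemma (in group) mixable_iff_uniform_word:
  "mixable G \<longleftrightarrow>
     (\<exists>w. set w \<subseteq> carrier G \<times> {0..1} \<and> (\<forall>x\<in>carrier G. word_dist G w x = 1 / real (card (carrier G))))"
proof
  assume "mixable G"
  then obtain k gs ps where k: "\<forall>i<k. gs i \<in> carrier G \<and> 0 \<le> ps i \<and> ps i \<le> 1"
    and unif: "\<forall>x\<in>carrier G.
         (\<Sum>S\<in>Pow {..<k}. if word_prod G gs k S = x
                             then (\<Prod>i<k. if i \<in> S then ps i else 1 - ps i) else 0)
         = 1 / real (card (carrier G))"
    unfolding mixable_def by blast
  show "\<exists>w. set w \<subseteq> carrier G \<times> {0..1} \<and> (\<forall>x\<in>carrier G. word_dist G w x = 1 / real (card (carrier G)))"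
    using k unif word_dist_eq_sum_Pow[of k gs]
    by (intro exI[of _ "map (\<lambda>i. (gs i, ps i)) [0..<k]"]) auto
next
  assume "\<exists>w. set w \<subseteq> carrier G \<times> {0..1} \<and> (\<forall>x\<in>carrier G. word_dist G w x = 1 / real (card (carrier G)))"
  then obtain w where w: "set w \<subseteq> carrier G \<times> {0..1}"
    and unif: "\<forall>x\<in>carrier G. word_dist G w x = 1 / real (card (carrier G))"
    by blast
  define gs where "gs i = fst (w ! i)" for i
  define ps where "ps i = snd (w ! i)" for i
  have w_eq: "map (\<lambda>i. (gs i, ps i)) [0..<length w] = w"
    by (rule nth_equalityI) (simp_all add: gs_def ps_def)
  have letters: "gs i \<in> carrier G \<and> 0 \<le> ps i \<and> ps i \<le> 1" if "i < length w" for i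
    using w nth_mem[OF that] by (force simp: gs_def ps_def)
  show "mixable G"
    unfolding mixable_def
    using letters unif word_dist_eq_sum_Pow[of "length w" gs _ ps]
    by (intro exI[of _ "length w"] exI[of _ gs] exI[of _ ps]) (simp add: w_eq)
qed

lemma (in group) sum_carrier_mult_left:
  assumes "g \<in> carrier G"
  shows "(\<Sum>x\<in>carrier G. h (g \<otimes> x)) = (\<Sum>x\<in>carrier G. h x)"
  by (rule sum.reindex_bij_witness[of _ "\<lambda>y. inv g \<otimes> y" "\<lambda>x. g \<otimes> x"])
     (use assms in \<open>auto simp: m_assoc[symmetric]\<close>)

lemma (in group) orbit_dist_eq_sum:
  assumes fin: "finite (carrier G)" and w: "fst ` set w \<subseteq> carrier G"
    and act_one: "\<And>x. x \<in> E \<Longrightarrow> act \<one> x = x"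
    and act_mult: "\<And>a b x. a \<in> carrier G \<Longrightarrow> b \<in> carrier G \<Longrightarrow> x \<in> E \<Longrightarrow>
                     act (a \<otimes> b) x = act a (act b x)"
    and act_closed: "\<And>a x. a \<in> carrier G \<Longrightarrow> x \<in> E \<Longrightarrow> act a x \<in> E"
    and "x \<in> E"
  shows "orbit_dist G act w \<mu> x = (\<Sum>y\<in>carrier G. word_dist G w y * \<mu> (act (inv y) x))"
  using w \<open>x \<in> E\<close>
proof (induction w arbitrary: x)
  case Nil
  have "(\<Sum>y\<in>carrier G. of_bool (y = \<one>) * \<mu> (act (inv y) x)) = \<mu> (act (inv \<one>) x)"
    by (simp add: fin if_distrib[of "\<lambda>t. t * _"] sum.delta' cong: if_cong)
  then show ?case
    using Nil.prems act_one by simp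
next
  case (Cons gp w)
  obtain g p where gp: "gp = (g, p)" by force
  have g: "g \<in> carrier G" and w: "fst ` set w \<subseteq> carrier G"
    using Cons.prems(1) by (auto simp: gp)
  have "orbit_dist G act w \<mu> (act (inv g) x)
      = (\<Sum>y\<in>carrier G. word_dist G w y * \<mu> (act (inv y) (act (inv g) x)))"
    using Cons.IH[OF w] act_closed g Cons.prems(2) by simp
  also have "\<dots> = (\<Sum>y\<in>carrier G. word_dist G w (inv g \<otimes> (g \<otimes> y)) * \<mu> (act (inv (g \<otimes> y)) x))"
    using g Cons.prems(2) by (intro sum.cong) (simp_all add: act_mult inv_mult_group m_assoc[symmetric])
  also have "\<dots> = (\<Sum>y\<in>carrier G. word_dist G w (inv g \<otimes> y) * \<mu> (act (inv y) x))"
    using g by (rule sum_carrier_mult_left)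
  finally have shifted: "orbit_dist G act w \<mu> (act (inv g) x)
      = (\<Sum>y\<in>carrier G. word_dist G w (inv g \<otimes> y) * \<mu> (act (inv y) x))" .
  have "orbit_dist G act (gp # w) \<mu> x
      = (1 - p) * (\<Sum>y\<in>carrier G. word_dist G w y * \<mu> (act (inv y) x))
        + p * (\<Sum>y\<in>carrier G. word_dist G w (inv g \<otimes> y) * \<mu> (act (inv y) x))"
    using Cons.IH[OF w Cons.prems(2)] by (simp add: gp shifted)
  also have "\<dots> = (\<Sum>y\<in>carrier G. ((1 - p) * word_dist G w y + p * word_dist G w (inv g \<otimes> y))
                                     * \<mu> (act (inv y) x))"
    by (simp add: sum.distrib sum_distrib_left distrib_right mult.assoc)
  finally show ?case
    by (simp add: gp)
qed

lemma (in group) word_dist_append: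
  assumes "finite (carrier G)" "fst ` set w1 \<subseteq> carrier G" "x \<in> carrier G"
  shows "word_dist G (w1 @ w2) x = (\<Sum>y\<in>carrier G. word_dist G w1 y * word_dist G w2 (inv y \<otimes> x))"
proof -
  have "word_dist G (w1 @ w2) x = orbit_dist G (\<otimes>) w1 (word_dist G w2) x"
    by (simp add: word_dist_def orbit_dist_append)
  also have "\<dots> = (\<Sum>y\<in>carrier G. word_dist G w1 y * word_dist G w2 (inv y \<otimes> x))"
    by (rule orbit_dist_eq_sum[where E = "carrier G"]) (use assms in \<open>auto simp: m_assoc\<close>)
  finally show ?thesis .
qed

lemma (in group) word_dist_sum_eq_1:
  assumes "finite (carrier G)" "fst ` set w \<subseteq> carrier G"
  shows "(\<Sum>x\<in>carrier G. word_dist G w x) = 1"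
  using assms(2)
proof (induction w)
  case Nil
  then show ?case using assms(1) by (simp add: sum.delta')
next
  case (Cons gp w)
  obtain g p where gp: "gp = (g, p)" by force
  have g: "g \<in> carrier G" using Cons.prems gp by auto
  have "(\<Sum>x\<in>carrier G. word_dist G w (inv g \<otimes> x)) = (\<Sum>x\<in>carrier G. word_dist G w x)"
    using sum_carrier_mult_left[of "inv g" "word_dist G w"] g by simp
  then show ?case
    using Cons gp by (simp add: sum.distrib sum_distrib_left[symmetric])
qed

lemma (in group) word_dist_eq_0_outside_subgroup:
  assumes "subgroup H G" "fst ` set w \<subseteq> H" "x \<in> carrier G - H"
  shows "word_dist G w x = 0"
  using assms(2,3)
proof (induction w arbitrary: x)
  case (Cons gp w)
  obtain g p where gp: "gp = (g, p)" by force
  have g: "g \<in> H" and w: "fst ` set w \<subseteq> H"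
    using Cons.prems(1) gp by auto
  have "inv g \<otimes> x \<in> carrier G - H"
  proof
    show "inv g \<otimes> x \<in> carrier G"
      using g Cons.prems(2) subgroup.subset[OF assms(1)] by auto
    show "inv g \<otimes> x \<notin> H"
    proof
      assume "inv g \<otimes> x \<in> H"
      then have "g \<otimes> (inv g \<otimes> x) \<in> H"
        using g subgroup.m_closed[OF assms(1)] by blast
      then show False
        using g Cons.prems(2) subgroup.subset[OF assms(1)] by (auto simp: m_assoc[symmetric])
    qed
  qed
  then show ?case
    using Cons.IH[OF w] Cons.prems(2) gp by simp
qed (use subgroup.one_closed[OF assms(1)] in auto)

lemma (in group) word_dist_const_eq_uniform:
  assumes "finite (carrier G)" "fst ` set w \<subseteq> carrier G" "\<forall>x\<in>carrier G. word_dist G w x = c"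
  shows "c = 1 / real (card (carrier G))"
proof -
  have "real (card (carrier G)) * c = 1"
    using word_dist_sum_eq_1[OF assms(1,2)] assms(3) by simp
  moreover from this have "real (card (carrier G)) \<noteq> 0"
    by (metis mult_zero_left zero_neq_one)
  ultimately show ?thesis
    by (simp add: field_simps)
qed

text \<open>\<open>W_cosets\<close> says that \<open>W\<close> puts the same mass \<open>C\<close> on every left coset \<open>h K\<close>, \<open>h \<in> H\<close>.\<close>

lemma (in group) word_dist_append_uniform_cosets:
  assumes fin: "finite (carrier G)" and H: "subgroup H G" and K: "subgroup K G" "K \<subseteq> H"
    and W: "fst ` set W \<subseteq> H"
    and W_cosets: "\<And>h. h \<in> H \<Longrightarrow> (\<Sum>y\<in>carrier G. word_dist G W y * of_bool (inv y \<otimes> h \<in> K)) = C"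
    and R: "\<And>x. x \<in> carrier G \<Longrightarrow> word_dist G R x = c * of_bool (x \<in> K)"
    and x: "x \<in> carrier G"
  shows "word_dist G (W @ R) x = c * C * of_bool (x \<in> H)"
proof -
  have W_carrier: "fst ` set W \<subseteq> carrier G"
    using W subgroup.subset[OF H] by blast
  have "word_dist G (W @ R) x = c * (\<Sum>y\<in>carrier G. word_dist G W y * of_bool (inv y \<otimes> x \<in> K))"
    using x by (simp add: word_dist_append[OF fin W_carrier x] R sum_distrib_left mult_ac)
  also have "\<dots> = c * C * of_bool (x \<in> H)"
  proof (cases "x \<in> H")
    case True
    then show ?thesis by (simp add: W_cosets)
  next
    case False
    have zero: "word_dist G W y * of_bool (inv y \<otimes> x \<in> K) = 0" if y: "y \<in> carrier G" for y
    proof (cases "y \<in> H")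
      case True
      have "inv y \<otimes> x \<notin> K"
      proof
        assume "inv y \<otimes> x \<in> K"
        then have "y \<otimes> (inv y \<otimes> x) \<in> H"
          using True K(2) subgroup.m_closed[OF H] by blast
        then show False
          using False x y by (simp add: m_assoc[symmetric])
      qed
      then show ?thesis by simp
    next
      case False
      then show ?thesis
        using word_dist_eq_0_outside_subgroup[OF H W] y by simp
    qed
    have "(\<Sum>y\<in>carrier G. word_dist G W y * of_bool (inv y \<otimes> x \<in> K)) = 0"
      by (rule sum.neutral) (use zero in blast)
    then show ?thesis
      using False by simp
  qed
  finally show ?thesis .
qed

section \<open>Characters and mixability\<close>

lemma (in group) word_dist_character_sum:
  fixes f :: "'a \<Rightarrow> complex"
  assumes fin: "finite (carrier G)" and w: "fst ` set w \<subseteq> carrier G" and "f \<one> = 1"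
    and f_mult: "\<And>a b. a \<in> carrier G \<Longrightarrow> b \<in> carrier G \<Longrightarrow> f (a \<otimes> b) = f a * f b"
  shows "(\<Sum>x\<in>carrier G. of_real (word_dist G w x) * f x) = (\<Prod>(g, p)\<leftarrow>w. 1 - of_real p + of_real p * f g)"
  using w
proof (induction w)
  case Nil
  have "(\<Sum>x\<in>carrier G. of_real (word_dist G [] x) * f x) = (\<Sum>x\<in>carrier G. if x = \<one> then f x else 0)"
    by (rule sum.cong) auto
  then show ?case
    using fin \<open>f \<one> = 1\<close> by (simp add: sum.delta')
next
  case (Cons gp w)
  obtain g p where gp: "gp = (g, p)" by force
  have g: "g \<in> carrier G" and w: "fst ` set w \<subseteq> carrier G"
    using Cons.prems gp by auto
  have "(\<Sum>x\<in>carrier G. of_real (word_dist G w (inv g \<otimes> x)) * f x)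
      = (\<Sum>x\<in>carrier G. of_real (word_dist G w (inv g \<otimes> (g \<otimes> x))) * f (g \<otimes> x))"
    using sum_carrier_mult_left[OF g, of "\<lambda>x. of_real (word_dist G w (inv g \<otimes> x)) * f x"] by simp
  also have "\<dots> = f g * (\<Sum>x\<in>carrier G. of_real (word_dist G w x) * f x)"
    using g by (simp add: sum_distrib_left m_assoc[symmetric] f_mult mult_ac)
  finally have shifted: "(\<Sum>x\<in>carrier G. of_real (word_dist G w (inv g \<otimes> x)) * f x)
      = f g * (\<Sum>x\<in>carrier G. of_real (word_dist G w x) * f x)" .
  have "(\<Sum>x\<in>carrier G. of_real (word_dist G (gp # w) x) * f x)
      = (1 - of_real p) * (\<Sum>x\<in>carrier G. of_real (word_dist G w x) * f x)
        + of_real p * (\<Sum>x\<in>carrier G. of_real (word_dist G w (inv g \<otimes> x)) * f x)"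
    by (simp add: gp sum.distrib sum_distrib_left distrib_right mult.assoc)
  also have "\<dots> = (1 - of_real p + of_real p * f g) * (\<Sum>x\<in>carrier G. of_real (word_dist G w x) * f x)"
    unfolding shifted by (simp add: algebra_simps)
  finally show ?case
    using Cons.IH[OF w] by (simp add: gp)
qed

lemma (in group) character_sum_eq_0:
  fixes f :: "'a \<Rightarrow> complex"
  assumes "finite (carrier G)"
    and f_mult: "\<And>a b. a \<in> carrier G \<Longrightarrow> b \<in> carrier G \<Longrightarrow> f (a \<otimes> b) = f a * f b"
    and a: "a \<in> carrier G" "f a \<noteq> 1"
  shows "(\<Sum>x\<in>carrier G. f x) = 0"
proof -
  have "(\<Sum>x\<in>carrier G. f x) = (\<Sum>x\<in>carrier G. f (a \<otimes> x))"
    using sum_carrier_mult_left[OF a(1), of f] by simp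
  also have "\<dots> = f a * (\<Sum>x\<in>carrier G. f x)"
    using a(1) by (simp add: f_mult sum_distrib_left)
  finally have "(1 - f a) * (\<Sum>x\<in>carrier G. f x) = 0"
    by (simp add: algebra_simps)
  then show ?thesis
    using a(2) by simp
qed

lemma one_minus_plus_odd_root_of_unity_neq_0:
  fixes z :: complex and p :: real
  assumes "odd r" "z ^ r = 1"
  shows "1 - of_real p + of_real p * z \<noteq> 0"
proof
  assume zero: "1 - of_real p + of_real p * z = 0"
  then have "p \<noteq> 0" by auto
  with zero have "z = of_real ((p - 1) / p)"
    by (simp add: field_simps)
  then have "((p - 1) / p) ^ r = 1"
    using assms(2) by (metis of_real_eq_1_iff of_real_power)
  then have "(p - 1) / p = 1"
    using odd_real_root_power_cancel[OF assms(1)] odd_pos[OF assms(1)] by (metis real_root_one)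
  with \<open>p \<noteq> 0\<close> show False
    by (simp add: field_simps)
qed

lemma (in group) mixable_odd_order_character_trivial:
  fixes f :: "'a \<Rightarrow> complex"
  assumes fin: "finite (carrier G)" and "mixable G" and "f \<one> = 1"
    and f_mult: "\<And>a b. a \<in> carrier G \<Longrightarrow> b \<in> carrier G \<Longrightarrow> f (a \<otimes> b) = f a * f b"
    and "odd r" and f_root: "\<And>a. a \<in> carrier G \<Longrightarrow> f a ^ r = 1"
    and a: "a \<in> carrier G"
  shows "f a = 1"
proof (rule ccontr)
  assume "f a \<noteq> 1"
  obtain w where w: "set w \<subseteq> carrier G \<times> {0..1}"
    and unif: "\<And>x. x \<in> carrier G \<Longrightarrow> word_dist G w x = 1 / real (card (carrier G))"
    using \<open>mixable G\<close> mixable_iff_uniform_word by blast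
  have letters: "fst ` set w \<subseteq> carrier G"
    using w by auto
  have "(\<Prod>(g, p)\<leftarrow>w. 1 - of_real p + of_real p * f g)
      = (\<Sum>x\<in>carrier G. of_real (1 / real (card (carrier G))) * f x)"
    using word_dist_character_sum[OF fin letters \<open>f \<one> = 1\<close> f_mult] unif by simp
  also have "\<dots> = 0"
    using character_sum_eq_0[OF fin f_mult a \<open>f a \<noteq> 1\<close>] by (simp add: sum_divide_distrib[symmetric])
  finally have "0 \<in> set (map (\<lambda>(g, p). 1 - of_real p + of_real p * f g) w)"
    by (simp add: prod_list_zero_iff)
  then obtain g p where "(g, p) \<in> set w" "1 - of_real p + of_real p * f g = 0"
    by auto
  with w f_root \<open>odd r\<close> one_minus_plus_odd_root_of_unity_neq_0 show False
    by blast
qed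

section \<open>Finite fields\<close>

lemma power_mod_eq_if_power_eq_1:
  fixes x :: "'a::monoid_mult"
  assumes "x ^ N = 1"
  shows "x ^ (e mod N) = x ^ e"
proof -
  have "x ^ e = (x ^ N) ^ (e div N) * x ^ (e mod N)"
    by (metis div_mult_mod_eq power_add power_mult mult.commute)
  then show ?thesis
    using assms by simp
qed

lemma ex_map_powers_to_powers:
  fixes \<gamma> :: "'a::monoid_mult" and \<omega> :: "'b::monoid_mult"
  assumes inj: "inj_on (\<lambda>e. \<gamma> ^ e) {..<N}" and "N > 0" "\<gamma> ^ N = 1" "\<omega> ^ N = 1"
  shows "\<exists>\<psi>. \<forall>e. \<psi> (\<gamma> ^ e) = \<omega> ^ e"
proof -
  define \<psi> where "\<psi> x = \<omega> ^ inv_into {..<N} (\<lambda>e. \<gamma> ^ e) x" for x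
  have "\<psi> (\<gamma> ^ e) = \<omega> ^ e" for e
  proof -
    have "inv_into {..<N} (\<lambda>e. \<gamma> ^ e) (\<gamma> ^ (e mod N)) = e mod N"
      using inv_into_f_f[OF inj] \<open>N > 0\<close> by simp
    then show ?thesis
      using assms(3,4) by (simp add: \<psi>_def power_mod_eq_if_power_eq_1)
  qed
  then show ?thesis
    by blast
qed

lemma card_field_ge_2: "CARD('a::{field,finite}) \<ge> 2"
proof -
  have "card {0::'a, 1} \<le> CARD('a)"
    by (rule card_mono) auto
  then show ?thesis
    by simp
qed

lemma finite_field_primitive_element:
  obtains a :: "'a::{field,finite}" where "a ^ (CARD('a) - 1) = 1" "\<And>t. t \<noteq> 0 \<Longrightarrow> \<exists>i. t = a ^ i"
proof -
  define R where "R = (ring_of_type_algebra :: 'a ring)"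
  interpret R: field R
    unfolding R_def by (rule field_from_type_algebra)
  have R_pow: "a [^]\<^bsub>R\<^esub> (i::nat) = a ^ i" for a i
    by (induction i) (simp_all add: R_def ring_of_type_algebra_def mult.commute)
  \<comment> \<open>\<open>Ring_Divisibility\<close>, imported with \<open>Algebraic_Closure_Type\<close>, declares a second \<open>mult_of\<close>.\<close>
  have R_simps: "carrier R = UNIV" "carrier (Multiplicative_Group.mult_of R) = UNIV - {0}"
    "\<one>\<^bsub>R\<^esub> = 1" "\<zero>\<^bsub>R\<^esub> = 0"
    by (simp_all add: R_def ring_of_type_algebra_def)
  obtain a where a: "a \<in> carrier (Multiplicative_Group.mult_of R)"
    and gen: "carrier (Multiplicative_Group.mult_of R) = {a [^]\<^bsub>R\<^esub> i | i::nat. i \<in> UNIV}"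
    using R.finite_field_mult_group_has_gen by auto
  interpret M: group "Multiplicative_Group.mult_of R"
    by (rule R.field_mult_group)
  have "a [^]\<^bsub>Multiplicative_Group.mult_of R\<^esub> order (Multiplicative_Group.mult_of R)
      = \<one>\<^bsub>Multiplicative_Group.mult_of R\<^esub>"
    using a by (rule M.pow_order_eq_1)
  then have "a ^ card (carrier (Multiplicative_Group.mult_of R)) = 1"
    by (simp add: order_def R_simps R_pow Multiplicative_Group.nat_pow_mult_of)
  moreover have "\<exists>i. t = a ^ i" if "t \<noteq> 0" for t
    using that gen by (auto simp: R_simps R_pow)
  ultimately show ?thesis
    using that[of a] by (simp add: R_simps card_Diff_singleton)
qed

lemma finite_field_generator:
  obtains \<gamma> :: "'a::{field,finite}"
  where "\<gamma> ^ (CARD('a) - 1) = 1" "bij_betw (\<lambda>e. \<gamma> ^ e) {..<CARD('a) - 1} (UNIV - {0})"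
proof -
  define N where "N = CARD('a) - 1"
  obtain a :: 'a where a_N: "a ^ N = 1" and gen: "\<And>t. t \<noteq> 0 \<Longrightarrow> \<exists>i. t = a ^ i"
    using finite_field_primitive_element[where 'a = 'a] unfolding N_def by blast
  have "N > 0"
    using card_field_ge_2[where 'a = 'a] by (simp add: N_def)
  have onto: "(\<lambda>e. a ^ e) ` {..<N} = UNIV - {0}"
  proof
    show "(\<lambda>e. a ^ e) ` {..<N} \<subseteq> UNIV - {0}"
      using a_N \<open>N > 0\<close> by (auto simp: power_0_left)
    show "UNIV - {0} \<subseteq> (\<lambda>e. a ^ e) ` {..<N}"
    proof
      fix t :: 'a
      assume "t \<in> UNIV - {0}"
      then obtain i where "t = a ^ i"
        using gen by blast
      then have "t = a ^ (i mod N)"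
        by (simp add: power_mod_eq_if_power_eq_1[OF a_N])
      then show "t \<in> (\<lambda>e. a ^ e) ` {..<N}"
        using \<open>N > 0\<close> by auto
    qed
  qed
  then have "inj_on (\<lambda>e. a ^ e) {..<N}"
    by (intro eq_card_imp_inj_on) (simp_all add: card_Diff_singleton N_def)
  with onto have "bij_betw (\<lambda>e. a ^ e) {..<N} (UNIV - {0})"
    by (simp add: bij_betw_def)
  with a_N that show ?thesis
    unfolding N_def by blast
qed

lemma odd_divisor_if_not_power_of_2:
  fixes n :: nat
  assumes "n > 0" "\<nexists>m. n = 2 ^ m"
  shows "\<exists>r. odd r \<and> r > 1 \<and> r dvd n"
  using assms
proof (induction n rule: less_induct)
  case (less n)
  show ?case
  proof (cases "even n")
    case True
    then obtain k where k: "n = 2 * k" ..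
    have "\<nexists>m. k = 2 ^ m"
      using less.prems(2) k by (metis power_Suc)
    then obtain r where "odd r \<and> r > 1 \<and> r dvd k"
      using less.IH[of k] less.prems(1) k by auto
    then show ?thesis
      using k by auto
  next
    case False
    then have "n \<noteq> 1"
      using less.prems(2) by (metis power_0)
    with False less.prems(1) show ?thesis
      by auto
  qed
qed

lemma nontrivial_odd_root_of_unity:
  assumes "odd r" "r > 1"
  obtains \<omega> :: complex where "\<omega> ^ r = 1" "\<omega> \<noteq> 1"
proof
  show "cis (2 * pi / r) ^ r = 1"
    using assms by (simp add: Complex.DeMoivre)
  have "r \<ge> 3"
    using assms by (cases "r = 2") auto
  then have "sin (2 * pi / r) > 0"
    by (intro sin_gt_zero) (simp_all add: field_simps)
  then show "cis (2 * pi / r) \<noteq> 1"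
    by (auto simp: complex_eq_iff)
qed

lemma finite_field_odd_order_character:
  assumes r: "odd r" "r > 1" "r dvd CARD('a::{field,finite}) - 1"
  obtains \<psi> :: "'a::{field,finite} \<Rightarrow> complex" and \<gamma> :: 'a
  where "\<And>s t. s \<noteq> 0 \<Longrightarrow> t \<noteq> 0 \<Longrightarrow> \<psi> (s * t) = \<psi> s * \<psi> t" "\<psi> 1 = 1"
    "\<And>t. t \<noteq> 0 \<Longrightarrow> \<psi> t ^ r = 1" "\<gamma> \<noteq> 0" "\<psi> \<gamma> \<noteq> 1"
proof -
  define N where "N = CARD('a) - 1"
  obtain \<gamma> :: 'a where \<gamma>_N: "\<gamma> ^ N = 1" and \<gamma>: "bij_betw (\<lambda>e. \<gamma> ^ e) {..<N} (UNIV - {0})"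
    unfolding N_def by (rule finite_field_generator)
  have "N > 0"
    using card_field_ge_2[where 'a = 'a] by (simp add: N_def)
  then have "\<gamma> \<noteq> 0"
    using \<gamma>_N by (auto simp: power_0_left)
  have log: "\<exists>e. t = \<gamma> ^ e" if "t \<noteq> 0" for t
    using that \<gamma> by (auto simp: bij_betw_def)
  obtain \<omega> :: complex where \<omega>_r: "\<omega> ^ r = 1" and "\<omega> \<noteq> 1"
    using nontrivial_odd_root_of_unity[OF r(1,2)] by blast
  then have "\<omega> ^ N = 1"
    using r(3) by (auto simp: N_def power_mult)
  obtain \<psi> where \<psi>: "\<And>e. \<psi> (\<gamma> ^ e) = \<omega> ^ e"
    using ex_map_powers_to_powers[OF bij_betw_imp_inj_on[OF \<gamma>] \<open>N > 0\<close> \<gamma>_N \<open>\<omega> ^ N = 1\<close>] by blast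
  show ?thesis
  proof
    show "\<psi> (s * t) = \<psi> s * \<psi> t" if "s \<noteq> 0" "t \<noteq> 0" for s t
      using log[OF that(1)] log[OF that(2)] by (auto simp: \<psi> power_add[symmetric])
    show "\<psi> 1 = 1"
      using \<psi>[of 0] by simp
    show "\<psi> t ^ r = 1" if "t \<noteq> 0" for t
      using log[OF that] \<omega>_r by (auto simp: \<psi>) (metis mult.commute power_mult power_one)
    show "\<gamma> \<noteq> 0" "\<psi> \<gamma> \<noteq> 1"
      using \<open>\<gamma> \<noteq> 0\<close> \<open>\<omega> \<noteq> 1\<close> \<psi>[of 1] by simp_all
  qed
qed

section \<open>General linear groups and elementary matrices\<close>

lemma GL_group_simps [simp]:
  "carrier (GL_group :: ('a::field^'n^'n) monoid) = {A. invertible A}"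
  "A \<otimes>\<^bsub>(GL_group :: ('a::field^'n^'n) monoid)\<^esub> B = A ** B"
  "\<one>\<^bsub>(GL_group :: ('a::field^'n^'n) monoid)\<^esub> = mat 1"
  by (simp_all add: GL_group_def)

lemma group_GL_group: "group (GL_group :: ('a::field^'n^'n) monoid)"
proof (rule groupI)
  fix A :: "'a^'n^'n"
  assume "A \<in> carrier GL_group"
  then show "\<exists>B\<in>carrier GL_group. B \<otimes>\<^bsub>GL_group\<^esub> A = \<one>\<^bsub>GL_group\<^esub>"
    by (auto simp: invertible_def intro: exI[of _ "matrix_inv A"])
qed (simp_all add: invertible_mult matrix_mul_assoc invertible_def[of "mat 1"])

lemma GL_inv_eq:
  fixes A B :: "'a::field^'n^'n"
  assumes "\<And>v. A *v (B *v v) = v"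
  shows "A \<in> carrier GL_group" "inv\<^bsub>GL_group\<^esub> A = B"
proof -
  have AB: "A ** B = mat 1"
    by (simp add: matrix_eq matrix_vector_mul_assoc[symmetric] assms)
  then have BA: "B ** A = mat 1"
    by (simp add: matrix_left_right_inverse)
  show A: "A \<in> carrier GL_group"
    using AB BA by (auto simp: invertible_def)
  have "B \<in> carrier GL_group"
    using AB BA by (auto simp: invertible_def)
  with A BA show "inv\<^bsub>GL_group\<^esub> A = B"
    by (simp add: group.inv_equality[OF group_GL_group])
qed

lemma GL_inv_mult_vec [simp]:
  fixes A :: "'a::field^'n^'n"
  assumes "A \<in> carrier GL_group"
  shows "inv\<^bsub>GL_group\<^esub> A *v (A *v v) = v" "A *v (inv\<^bsub>GL_group\<^esub> A *v v) = v"
  using group.l_inv[OF group_GL_group assms] group.r_inv[OF group_GL_group assms]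
  by (simp_all add: matrix_vector_mul_assoc)

definition scale_mat :: "'n \<Rightarrow> 'a::field \<Rightarrow> 'a^'n^'n" where
  "scale_mat j c = (\<chi> r s. if r = s then if r = j then c else 1 else 0)"

definition transvection :: "'n \<Rightarrow> 'n \<Rightarrow> 'a::field \<Rightarrow> 'a^'n^'n" where
  "transvection i j c = (\<chi> r s. of_bool (r = s) + of_bool (r = i \<and> s = j) * c)"

definition swap_mat :: "'n \<Rightarrow> 'n \<Rightarrow> 'a::field^'n^'n" where
  "swap_mat i j = (\<chi> r s. of_bool (s = (if r = i then j else if r = j then i else r)))"

lemma scale_mat_mult_vec_nth [simp]: "(scale_mat j c *v v) $ r = (if r = j then c * v $ r else v $ r)"
  unfolding scale_mat_def matrix_vector_mult_def
  by (simp add: if_distrib[of "\<lambda>x. x * _"] sum.delta cong: if_cong)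

lemma transvection_mult_vec_nth [simp]:
  "(transvection i j c *v v) $ r = v $ r + (if r = i then c * v $ j else 0)"
  unfolding transvection_def matrix_vector_mult_def
  by (simp add: of_bool_def distrib_right sum.distrib if_distrib[of "\<lambda>x. x * _"] sum.delta cong: if_cong)

lemma swap_mat_mult_vec_nth [simp]:
  "(swap_mat i j *v v) $ r = v $ (if r = i then j else if r = j then i else r)"
  unfolding swap_mat_def matrix_vector_mult_def
  by (simp add: if_distrib[of "\<lambda>x. x * _"] sum.delta cong: if_cong)

lemma scale_mat_GL:
  fixes j :: "'n::finite" and c :: "'a::field"
  assumes "c \<noteq> 0"
  shows "scale_mat j c \<in> carrier GL_group" "inv\<^bsub>GL_group\<^esub> (scale_mat j c) = scale_mat j (inverse c)"
proof -
  have "scale_mat j c *v (scale_mat j (inverse c) *v v) = v" for v :: "'a^'n"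
    using assms by (simp add: vec_eq_iff)
  then show "scale_mat j c \<in> carrier GL_group" "inv\<^bsub>GL_group\<^esub> (scale_mat j c) = scale_mat j (inverse c)"
    by (rule GL_inv_eq)+
qed

lemma transvection_GL:
  fixes i j :: "'n::finite" and c :: "'a::field"
  assumes "i \<noteq> j"
  shows "transvection i j c \<in> carrier GL_group" "inv\<^bsub>GL_group\<^esub> (transvection i j c) = transvection i j (- c)"
proof -
  have "transvection i j c *v (transvection i j (- c) *v v) = v" for v :: "'a^'n"
    using assms by (simp add: vec_eq_iff)
  then show "transvection i j c \<in> carrier GL_group" "inv\<^bsub>GL_group\<^esub> (transvection i j c) = transvection i j (- c)"
    by (rule GL_inv_eq)+
qed

lemma swap_mat_GL:
  fixes i j :: "'n::finite"
  shows "(swap_mat i j :: 'a::field^'n^'n) \<in> carrier GL_group" "inv\<^bsub>GL_group\<^esub> (swap_mat i j :: 'a::field^'n^'n) = swap_mat i j"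
proof -
  have "swap_mat i j *v (swap_mat i j *v v) = v" for v :: "'a::field^'n"
    by (auto simp: vec_eq_iff)
  then show "(swap_mat i j :: 'a::field^'n^'n) \<in> carrier GL_group" "inv\<^bsub>GL_group\<^esub> (swap_mat i j :: 'a::field^'n^'n) = swap_mat i j"
    by (rule GL_inv_eq)+
qed

lemma det_scale_mat: "det (scale_mat j c) = c"
proof -
  have "det (scale_mat j c) = (\<Prod>r\<in>UNIV. scale_mat j c $ r $ r)"
    by (rule det_diagonal) (simp add: scale_mat_def)
  then show ?thesis
    by (simp add: scale_mat_def prod.delta)
qed

section \<open>Necessity\<close>

lemma mixable_GL_imp_power_of_2:
  assumes mix: "mixable (GL_group :: ('a::{field,finite}^'n^'n) monoid)"
  shows "\<exists>m. CARD('a) - 1 = 2 ^ m"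
proof (rule ccontr)
  assume "\<nexists>m. CARD('a) - 1 = 2 ^ m"
  moreover have "CARD('a) - 1 > 0"
    using card_field_ge_2[where 'a = 'a] by simp
  ultimately obtain r where r: "odd r" "r > 1" "r dvd CARD('a) - 1"
    using odd_divisor_if_not_power_of_2 by blast
  obtain \<psi> :: "'a \<Rightarrow> complex" and \<gamma>
    where \<psi>_mult: "\<And>s t. s \<noteq> 0 \<Longrightarrow> t \<noteq> 0 \<Longrightarrow> \<psi> (s * t) = \<psi> s * \<psi> t"
      and "\<psi> 1 = 1" and \<psi>_root: "\<And>t. t \<noteq> 0 \<Longrightarrow> \<psi> t ^ r = 1" and "\<gamma> \<noteq> 0" "\<psi> \<gamma> \<noteq> 1"
    using finite_field_odd_order_character[OF r] by blast
  interpret GL: group "GL_group :: ('a^'n^'n) monoid"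
    by (rule group_GL_group)
  define f where "f A = \<psi> (det A)" for A :: "'a^'n^'n"
  have f_mult: "f (A \<otimes>\<^bsub>GL_group\<^esub> B) = f A * f B" if "A \<in> carrier GL_group" "B \<in> carrier GL_group" for A B
    using that by (simp add: f_def det_mul \<psi>_mult invertible_det_nz)
  have f_one: "f \<one>\<^bsub>GL_group\<^esub> = 1"
    using \<open>\<psi> 1 = 1\<close> by (simp add: f_def)
  have f_root: "f A ^ r = 1" if "A \<in> carrier GL_group" for A
    using that by (simp add: f_def \<psi>_root invertible_det_nz)
  fix j :: 'n
  have "f (scale_mat j \<gamma>) = 1"
    using \<open>\<gamma> \<noteq> 0\<close>
    by (intro GL.mixable_odd_order_character_trivial[OF _ mix f_one f_mult \<open>odd r\<close> f_root])
       (use scale_mat_GL in auto)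
  with \<open>\<psi> \<gamma> \<noteq> 1\<close> show False
    by (simp add: f_def det_scale_mat)
qed

section \<open>Stabilisers of standard basis vectors\<close>

abbreviation vec_dist :: "(('a::field^'n^'n) \<times> real) list \<Rightarrow> ('a^'n \<Rightarrow> real) \<Rightarrow> 'a^'n \<Rightarrow> real" where
  "vec_dist \<equiv> orbit_dist GL_group (*v)"

lemma vec_dist_eq_sum:
  fixes w :: "(('a::{field,finite}^'n^'n) \<times> real) list"
  assumes "fst ` set w \<subseteq> carrier GL_group"
  shows "vec_dist w \<mu> v = (\<Sum>y\<in>carrier GL_group. word_dist GL_group w y * \<mu> (inv\<^bsub>GL_group\<^esub> y *v v))"
  by (rule group.orbit_dist_eq_sum[OF group_GL_group, where E = UNIV])
     (use assms in \<open>simp_all add: matrix_vector_mul_assoc\<close>)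

definition coord_supp :: "'a::zero^'n \<Rightarrow> 'n set" where
  "coord_supp v = {i. v $ i \<noteq> 0}"

definition pivot_vecs :: "'n \<Rightarrow> 'n set \<Rightarrow> ('a::zero^'n) set" where
  "pivot_vecs j M = {v. v $ j \<noteq> 0 \<and> coord_supp v \<subseteq> insert j M}"

text \<open>For \<open>c \<notin> F\<close>, \<open>escaping_vecs F UNIV\<close> is the orbit of \<open>e\<^sub>c\<close> under \<open>basis_stabilizer F\<close>.\<close>

definition escaping_vecs :: "'n set \<Rightarrow> 'n set \<Rightarrow> ('a::zero^'n) set" where
  "escaping_vecs F M = {v. coord_supp v \<subseteq> M \<and> \<not> coord_supp v \<subseteq> F}"

definition basis_stabilizer :: "'n set \<Rightarrow> ('a::field^'n^'n) set" where
  "basis_stabilizer S = {A. invertible A \<and> (\<forall>s\<in>S. A *v axis s 1 = axis s 1)}"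

lemma matrix_vector_mult_axis_nth: "(A *v axis s 1) $ r = (A :: 'a::comm_ring_1^'n^'m) $ r $ s"
  unfolding matrix_vector_mult_def axis_def
  by (simp add: if_distrib[of "\<lambda>x. _ * x"] sum.delta' cong: if_cong)

lemma basis_stabilizer_fixes:
  assumes A: "A \<in> basis_stabilizer S" and v: "coord_supp v \<subseteq> S"
  shows "A *v v = v"
proof -
  have col: "A $ r $ s = of_bool (r = s)" if "s \<in> S" for r s
    using A that matrix_vector_mult_axis_nth[of A s r] by (auto simp: basis_stabilizer_def axis_def)
  have "(A *v v) $ r = v $ r" for r
  proof -
    have "(A *v v) $ r = (\<Sum>s\<in>UNIV. A $ r $ s * v $ s)"
      by (simp add: matrix_vector_mult_def)
    also have "\<dots> = (\<Sum>s\<in>UNIV. of_bool (r = s) * v $ s)"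
      by (rule sum.cong) (use col v in \<open>auto simp: coord_supp_def\<close>)
    also have "\<dots> = v $ r"
      by (simp add: of_bool_def if_distrib[of "\<lambda>x. x * _"] sum.delta cong: if_cong)
    finally show ?thesis .
  qed
  then show ?thesis
    by (simp add: vec_eq_iff)
qed

lemma basis_stabilizer_subgroup: "subgroup (basis_stabilizer S) (GL_group :: ('a::field^'n^'n) monoid)"
proof (rule group.subgroupI[OF group_GL_group])
  show "basis_stabilizer S \<subseteq> carrier (GL_group :: ('a^'n^'n) monoid)"
    by (auto simp: basis_stabilizer_def)
  show "basis_stabilizer S \<noteq> {}"
    by (auto simp: basis_stabilizer_def invertible_def intro!: exI[of _ "mat 1"])
next
  fix A :: "'a^'n^'n"
  assume A: "A \<in> basis_stabilizer S"
  then have "A \<in> carrier GL_group"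
    by (simp add: basis_stabilizer_def)
  moreover have "inv\<^bsub>GL_group\<^esub> A *v axis s 1 = axis s 1" if "s \<in> S" for s
    using A that GL_inv_mult_vec(1)[OF \<open>A \<in> carrier GL_group\<close>, of "axis s 1"]
    by (simp add: basis_stabilizer_def)
  ultimately show "inv\<^bsub>GL_group\<^esub> A \<in> basis_stabilizer S"
    using group.inv_closed[OF group_GL_group] by (auto simp: basis_stabilizer_def)
next
  fix A B :: "'a^'n^'n"
  assume "A \<in> basis_stabilizer S" "B \<in> basis_stabilizer S"
  then show "A \<otimes>\<^bsub>GL_group\<^esub> B \<in> basis_stabilizer S"
    by (auto simp: basis_stabilizer_def invertible_mult matrix_vector_mul_assoc[symmetric])
qed

lemma basis_stabilizer_antimono: "S \<subseteq> T \<Longrightarrow> basis_stabilizer T \<subseteq> basis_stabilizer S"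
  by (auto simp: basis_stabilizer_def)

lemma basis_stabilizer_empty: "basis_stabilizer {} = carrier GL_group"
  by (simp add: basis_stabilizer_def)

lemma basis_stabilizer_UNIV: "basis_stabilizer UNIV = {mat 1 :: 'a::field^'n^'n}"
proof
  show "basis_stabilizer UNIV \<subseteq> {mat 1 :: 'a^'n^'n}"
    using basis_stabilizer_fixes[of _ UNIV] by (auto simp: matrix_eq)
  show "{mat 1 :: 'a^'n^'n} \<subseteq> basis_stabilizer UNIV"
    using basis_stabilizer_subgroup[of UNIV] subgroup.one_closed by fastforce
qed

lemma basis_stabilizer_insert:
  "basis_stabilizer (insert c S) = {A \<in> basis_stabilizer S. A *v axis c 1 = axis c 1}"
  by (auto simp: basis_stabilizer_def)

lemma basis_stabilizer_inv_mult_vec_mem_iff: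
  assumes A: "A \<in> basis_stabilizer S" and Vs: "\<And>v. v \<in> Vs \<Longrightarrow> coord_supp v \<subseteq> S"
  shows "inv\<^bsub>GL_group\<^esub> A *v v \<in> Vs \<longleftrightarrow> v \<in> Vs"
proof -
  have A_GL: "A \<in> carrier GL_group"
    using A by (simp add: basis_stabilizer_def)
  have "inv\<^bsub>GL_group\<^esub> A \<in> basis_stabilizer S"
    using A subgroup.m_inv_closed[OF basis_stabilizer_subgroup] by blast
  then have "inv\<^bsub>GL_group\<^esub> A *v v = v" if "v \<in> Vs"
    using basis_stabilizer_fixes Vs that by blast
  moreover have "inv\<^bsub>GL_group\<^esub> A *v v = v" if "inv\<^bsub>GL_group\<^esub> A *v v \<in> Vs"
    using basis_stabilizer_fixes[OF A Vs[OF that]] GL_inv_mult_vec(2)[OF A_GL, of v] by simp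
  ultimately show ?thesis
    by metis
qed

lemma basis_stabilizer_mult_axis_escaping:
  assumes A: "A \<in> basis_stabilizer F" and "c \<notin> F"
  shows "A *v axis c 1 \<in> escaping_vecs F UNIV"
proof (rule ccontr)
  assume "A *v axis c 1 \<notin> escaping_vecs F UNIV"
  then have "coord_supp (A *v axis c 1) \<subseteq> F"
    by (simp add: escaping_vecs_def)
  then have "A *v axis c 1 = inv\<^bsub>GL_group\<^esub> A *v (A *v axis c 1)"
    using basis_stabilizer_inv_mult_vec_mem_iff[OF A, of "{A *v axis c 1}" "A *v axis c 1"] by simp
  also have "\<dots> = axis c 1"
    using A by (simp add: basis_stabilizer_def)
  finally show False
    using \<open>coord_supp (A *v axis c 1) \<subseteq> F\<close> \<open>c \<notin> F\<close> by (force simp: coord_supp_def subset_iff)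
qed

lemma scale_mat_basis_stabilizer:
  "c \<noteq> 0 \<Longrightarrow> scale_mat j c \<in> basis_stabilizer (- {j})"
  using scale_mat_GL(1)[of c j] by (auto simp: basis_stabilizer_def vec_eq_iff axis_def)

lemma transvection_basis_stabilizer:
  "i \<noteq> j \<Longrightarrow> transvection i j c \<in> basis_stabilizer (- {j})"
  using transvection_GL(1)[of i j c] by (auto simp: basis_stabilizer_def vec_eq_iff axis_def)

lemma swap_mat_basis_stabilizer:
  "i \<notin> S \<Longrightarrow> j \<notin> S \<Longrightarrow> swap_mat i j \<in> basis_stabilizer S"
  using swap_mat_GL(1)[of i j] by (auto simp: basis_stabilizer_def vec_eq_iff axis_def)

section \<open>Uniform words on orbits of basis vectors\<close>

lemma sum_lessThan_double: "(\<Sum>e<2 * (n::nat). f e) = (\<Sum>e<n. f e) + (\<Sum>e<n. f (n + e))"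
proof -
  have "(\<Sum>e<2 * n. f e) = (\<Sum>e\<in>{0..<n}. f e) + (\<Sum>e\<in>{n..<n + n}. f e)"
    by (simp add: sum.atLeastLessThan_concat mult_2 lessThan_atLeast0)
  also have "(\<Sum>e\<in>{n..<n + n}. f e) = (\<Sum>e<n. f (n + e))"
    using sum.atLeastLessThan_shift_bounds[of f 0 n n] by (simp add: lessThan_atLeast0 add.commute)
  finally show ?thesis
    by (simp add: lessThan_atLeast0)
qed

lemma scale_mat_1 [simp]: "scale_mat j 1 = mat 1"
  by (simp add: scale_mat_def mat_def vec_eq_iff)

lemma scale_mat_mult_vec_scale_mat [simp]:
  "scale_mat j a *v (scale_mat j b *v v) = scale_mat j (a * b) *v v"
  by (simp add: vec_eq_iff)

definition scaling_word :: "'a::field \<Rightarrow> nat \<Rightarrow> 'n \<Rightarrow> (('a^'n^'n) \<times> real) list" where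
  "scaling_word \<gamma> m j = map (\<lambda>t. (scale_mat j (inverse (\<gamma> ^ 2 ^ t)), 1 / 2)) [0..<m]"

text \<open>The letters rescale by \<open>\<gamma>^(2^t)\<close>, \<open>t < m\<close>, each with probability \<open>1/2\<close>, so the total
  exponent is a uniformly random \<open>m\<close>-bit number.\<close>

lemma vec_dist_scaling_word:
  fixes \<gamma> :: "'a::field" and j :: "'n::finite"
  assumes "\<gamma> \<noteq> 0"
  shows "vec_dist (scaling_word \<gamma> m j) \<mu> v = (\<Sum>e<2 ^ m. \<mu> (scale_mat j (\<gamma> ^ e) *v v)) / 2 ^ m"
proof (induction m arbitrary: \<mu>)
  case 0
  then show ?case
    by (simp add: scaling_word_def)
next
  case (Suc m)
  let ?g = "scale_mat j (inverse (\<gamma> ^ 2 ^ m)) :: 'a^'n^'n"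
  have "inv\<^bsub>GL_group\<^esub> ?g = scale_mat j (\<gamma> ^ 2 ^ m)"
    using assms scale_mat_GL(2)[of "inverse (\<gamma> ^ 2 ^ m)" j] by simp
  then have last: "vec_dist [(?g, 1 / 2)] \<mu> = (\<lambda>z. (\<mu> z + \<mu> (scale_mat j (\<gamma> ^ 2 ^ m) *v z)) / 2)"
    by (simp add: fun_eq_iff field_simps)
  have "vec_dist (scaling_word \<gamma> (Suc m) j) \<mu> v = vec_dist (scaling_word \<gamma> m j) (vec_dist [(?g, 1 / 2)] \<mu>) v"
    by (simp add: scaling_word_def orbit_dist_append)
  also have "\<dots> = (\<Sum>e<2 ^ m. (\<mu> (scale_mat j (\<gamma> ^ e) *v v) + \<mu> (scale_mat j (\<gamma> ^ (2 ^ m + e)) *v v)) / 2) / 2 ^ m"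
    by (simp only: Suc.IH last) (simp add: power_add mult.commute)
  also have "\<dots> = (\<Sum>e<2 ^ m. \<mu> (scale_mat j (\<gamma> ^ e) *v v) + \<mu> (scale_mat j (\<gamma> ^ (2 ^ m + e)) *v v)) / 2 ^ Suc m"
    by (simp add: sum_divide_distrib[symmetric])
  also have "\<dots> = (\<Sum>e<2 ^ Suc m. \<mu> (scale_mat j (\<gamma> ^ e) *v v)) / 2 ^ Suc m"
    by (simp add: sum_lessThan_double sum.distrib)
  finally show ?case .
qed

lemma uniform_scaling_word:
  fixes j :: "'n::finite"
  assumes "CARD('a::{field,finite}) - 1 = 2 ^ m"
  obtains w :: "(('a::{field,finite}^'n^'n) \<times> real) list"
  where "set w \<subseteq> basis_stabilizer (- {j}) \<times> {0..1}"
    and "\<And>\<mu> v. vec_dist w \<mu> v = (\<Sum>a\<in>UNIV - {0}. \<mu> (scale_mat j a *v v)) / (real CARD('a) - 1)"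
proof -
  obtain \<gamma> :: 'a where \<gamma>_N: "\<gamma> ^ (2 ^ m) = 1" and \<gamma>: "bij_betw (\<lambda>e. \<gamma> ^ e) {..<2 ^ m} (UNIV - {0})"
    by (rule finite_field_generator[where 'a = 'a, unfolded assms])
  have "\<gamma> \<noteq> 0"
    using \<gamma>_N by (auto simp: power_0_left)
  have "real CARD('a) - 1 = real (CARD('a) - 1)"
    using card_field_ge_2[where 'a = 'a] by (simp add: of_nat_diff)
  also have "\<dots> = 2 ^ m"
    unfolding assms by simp
  finally have "real CARD('a) - 1 = 2 ^ m" .
  show ?thesis
  proof
    show "set (scaling_word \<gamma> m j) \<subseteq> basis_stabilizer (- {j}) \<times> {0..1}"
      using \<open>\<gamma> \<noteq> 0\<close> by (auto simp: scaling_word_def intro!: scale_mat_basis_stabilizer)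
    show "vec_dist (scaling_word \<gamma> m j) \<mu> v = (\<Sum>a\<in>UNIV - {0}. \<mu> (scale_mat j a *v v)) / (real CARD('a) - 1)"
      for \<mu> v
      unfolding vec_dist_scaling_word[OF \<open>\<gamma> \<noteq> 0\<close>] \<open>real CARD('a) - 1 = 2 ^ m\<close>
        sum.reindex_bij_betw[OF \<gamma>, of "\<lambda>a. \<mu> (scale_mat j a *v v)"] ..
  qed
qed

lemma scale_mat_mult_vec_eq_axis_iff:
  fixes v :: "'a::field^'n::finite"
  assumes "a \<noteq> 0"
  shows "scale_mat j a *v v = axis j 1 \<longleftrightarrow> v \<in> pivot_vecs j {} \<and> a = inverse (v $ j)"
proof
  assume eq: "scale_mat j a *v v = axis j 1"
  have nth: "(if r = j then a * v $ r else v $ r) = (if r = j then 1 else 0)" for r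
    using arg_cong[OF eq, of "\<lambda>x. x $ r"] by (simp add: axis_def)
  have "a * v $ j = 1"
    using nth[of j] by simp
  then have "a = inverse (v $ j)" "v $ j \<noteq> 0"
    by (metis inverse_unique mult.commute, auto)
  moreover have "v $ r = 0" if "r \<noteq> j" for r
    using nth[of r] that by simp
  ultimately show "v \<in> pivot_vecs j {} \<and> a = inverse (v $ j)"
    by (auto simp: pivot_vecs_def coord_supp_def)
next
  assume "v \<in> pivot_vecs j {} \<and> a = inverse (v $ j)"
  then show "scale_mat j a *v v = axis j 1"
    by (auto simp: pivot_vecs_def coord_supp_def vec_eq_iff axis_def)
qed

lemma sum_units_scale_mat_eq_axis:
  fixes v :: "'a::{field,finite}^'n::finite"
  shows "(\<Sum>a\<in>UNIV - {0}. of_bool (scale_mat j a *v v = axis j 1)) = (of_bool (v \<in> pivot_vecs j {}) :: real)"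
proof (cases "v \<in> pivot_vecs j {}")
  case True
  then have "inverse (v $ j) \<in> UNIV - {0}"
    by (simp add: pivot_vecs_def)
  moreover have "(\<Sum>a\<in>UNIV - {0}. of_bool (scale_mat j a *v v = axis j 1))
      = (\<Sum>a\<in>UNIV - {0}. if a = inverse (v $ j) then 1 else 0 :: real)"
    using True by (intro sum.cong) (simp_all add: scale_mat_mult_vec_eq_axis_iff)
  ultimately show ?thesis
    using True by (simp only: sum.delta finite_Diff finite) simp
next
  case False
  then have "of_bool (scale_mat j a *v v = axis j 1) = (0 :: real)" if "a \<in> UNIV - {0}" for a
    using that by (simp add: scale_mat_mult_vec_eq_axis_iff)
  with False show ?thesis
    by simp
qed

lemma pivot_vecs_insert_iff:
  fixes v :: "'a::field^'n::finite"
  assumes "a \<noteq> 0" "i \<noteq> j" "i \<notin> M"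
  shows "scale_mat j a *v v \<in> pivot_vecs j M \<longleftrightarrow> v \<in> pivot_vecs j (insert i M) \<and> v $ i = 0"
    and "transvection i j (- 1) *v (scale_mat j a *v v) \<in> pivot_vecs j M
           \<longleftrightarrow> v \<in> pivot_vecs j (insert i M) \<and> v $ i = a * v $ j"
  using assms by (auto simp: pivot_vecs_def coord_supp_def subset_iff)

text \<open>For \<open>v\<close> in \<open>pivot_vecs j (insert i M)\<close>, the first indicator holds for all \<open>q - 1\<close> units \<open>a\<close>
  if \<open>v $ i = 0\<close>, the second one for exactly one \<open>a\<close> if \<open>v $ i \<noteq> 0\<close>; as \<open>1 - p = 1/q\<close>, both
  cases give \<open>p\<close>.\<close>

lemma sum_units_transvection_pivot_vecs:
  fixes v :: "'a::{field,finite}^'n::finite"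
  assumes "i \<noteq> j" "i \<notin> M" and p: "p = (real CARD('a) - 1) / real CARD('a)"
  shows "(\<Sum>a\<in>UNIV - {0}. (1 - p) * of_bool (scale_mat j a *v v \<in> pivot_vecs j M)
            + p * of_bool (transvection i j (- 1) *v (scale_mat j a *v v) \<in> pivot_vecs j M))
         = p * of_bool (v \<in> pivot_vecs j (insert i M))"
proof (cases "v \<in> pivot_vecs j (insert i M)")
  case False
  then have "(1 - p) * of_bool (scale_mat j a *v v \<in> pivot_vecs j M)
      + p * of_bool (transvection i j (- 1) *v (scale_mat j a *v v) \<in> pivot_vecs j M) = 0"
    if "a \<in> UNIV - {0}" for a
    using that by (simp add: pivot_vecs_insert_iff[OF _ assms(1,2)])
  with False show ?thesis
    by simp
next
  case True
  then have "v $ j \<noteq> 0"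
    by (simp add: pivot_vecs_def)
  have "(\<Sum>a\<in>UNIV - {0}. (1 - p) * of_bool (scale_mat j a *v v \<in> pivot_vecs j M)
            + p * of_bool (transvection i j (- 1) *v (scale_mat j a *v v) \<in> pivot_vecs j M))
      = (\<Sum>a\<in>UNIV - {0}. (1 - p) * of_bool (v $ i = 0) + p * of_bool (a = v $ i / v $ j))"
    using True \<open>v $ j \<noteq> 0\<close>
    by (intro sum.cong) (auto simp: field_simps pivot_vecs_insert_iff[OF _ assms(1,2)])
  also have "\<dots> = (1 - p) * (real CARD('a) - 1) * of_bool (v $ i = 0) + p * of_bool (v $ i \<noteq> 0)"
  proof -
    have "(\<Sum>a\<in>UNIV - {0::'a}. of_bool (a = v $ i / v $ j)) = (of_bool (v $ i \<noteq> 0) :: real)"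
      using \<open>v $ j \<noteq> 0\<close> by (simp add: of_bool_def sum.delta)
    then show ?thesis
      by (simp add: sum.distrib sum_distrib_left[symmetric])
  qed
  also have "\<dots> = p"
    using card_field_ge_2[where 'a = 'a] by (simp add: p field_simps)
  finally show ?thesis
    using True by simp
qed

text \<open>Induction on \<open>M\<close>: after the old word, a transvection adds the pivot coordinate to the
  new coordinate \<open>i\<close> with probability \<open>p = (q - 1)/q\<close>, and a uniform rescaling of the pivot
  then makes coordinate \<open>i\<close> uniform.\<close>

lemma ex_word_uniform_on_pivot_vecs:
  fixes j :: "'n::finite"
  assumes card: "CARD('a::{field,finite}) - 1 = 2 ^ m" and "j \<notin> M"
  shows "\<exists>(w :: (('a^'n^'n) \<times> real) list) C. C > 0 \<and> set w \<subseteq> basis_stabilizer (- {j}) \<times> {0..1} \<and>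
           (\<forall>v. vec_dist w (\<lambda>u. of_bool (u = axis j 1)) v = C * of_bool (v \<in> pivot_vecs j M))"
proof -
  obtain sw :: "(('a^'n^'n) \<times> real) list" where sw: "set sw \<subseteq> basis_stabilizer (- {j}) \<times> {0..1}"
    and sw_dist: "\<And>\<mu> v. vec_dist sw \<mu> v = (\<Sum>a\<in>UNIV - {0}. \<mu> (scale_mat j a *v v)) / (real CARD('a) - 1)"
    using uniform_scaling_word[OF card] by metis
  have "finite M"
    by simp
  then show ?thesis
    using \<open>j \<notin> M\<close>
  proof (induction M rule: finite_induct)
    case empty
    show ?case
      using sw card_field_ge_2[where 'a = 'a]
      by (intro exI[of _ sw] exI[of _ "1 / (real CARD('a) - 1)"]) (simp add: sw_dist sum_units_scale_mat_eq_axis)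
  next
    case (insert i M)
    have "i \<noteq> j" "j \<notin> M"
      using insert.prems by auto
    obtain w :: "(('a^'n^'n) \<times> real) list" and C where "C > 0"
      and w: "set w \<subseteq> basis_stabilizer (- {j}) \<times> {0..1}"
      and w_dist: "\<And>v. vec_dist w (\<lambda>u. of_bool (u = axis j 1)) v = C * of_bool (v \<in> pivot_vecs j M)"
      using insert.IH[OF \<open>j \<notin> M\<close>] by blast
    define p where "p = (real CARD('a) - 1) / real CARD('a)"
    have "0 \<le> p" "p \<le> 1"
      using card_field_ge_2[where 'a = 'a] by (simp_all add: p_def)
    define w' where "w' = sw @ [(transvection i j 1, p)] @ w"
    have "set w' \<subseteq> basis_stabilizer (- {j}) \<times> {0..1}"
      using sw w \<open>0 \<le> p\<close> \<open>p \<le> 1\<close> transvection_basis_stabilizer[OF \<open>i \<noteq> j\<close>] by (auto simp: w'_def)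
    have "vec_dist w' (\<lambda>u. of_bool (u = axis j 1)) v = C / CARD('a) * of_bool (v \<in> pivot_vecs j (insert i M))"
      for v
    proof -
      have "vec_dist w' (\<lambda>u. of_bool (u = axis j 1)) v
          = C * (\<Sum>a\<in>UNIV - {0}. (1 - p) * of_bool (scale_mat j a *v v \<in> pivot_vecs j M)
              + p * of_bool (transvection i j (- 1) *v (scale_mat j a *v v) \<in> pivot_vecs j M))
            / (real CARD('a) - 1)"
        by (simp add: w'_def orbit_dist_append sw_dist w_dist transvection_GL(2)[OF \<open>i \<noteq> j\<close>]
            sum_distrib_left algebra_simps)
      also have "\<dots> = C / CARD('a) * of_bool (v \<in> pivot_vecs j (insert i M))"
        unfolding sum_units_transvection_pivot_vecs[OF \<open>i \<noteq> j\<close> insert.hyps(2) p_def]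
        using card_field_ge_2[where 'a = 'a] by (simp add: p_def)
      finally show ?thesis .
    qed
    with \<open>set w' \<subseteq> _\<close> \<open>C > 0\<close> show ?case
      by (intro exI[of _ w'] exI[of _ "C / CARD('a)"]) simp
  qed
qed

lemma vec_dist_indicator_invariant:
  assumes "fst ` set w \<subseteq> basis_stabilizer S" and "\<And>v. v \<in> Vs \<Longrightarrow> coord_supp v \<subseteq> S"
  shows "vec_dist w (\<lambda>v. of_bool (v \<in> Vs)) v = of_bool (v \<in> Vs)"
proof (rule orbit_dist_invariant)
  fix g u
  assume "g \<in> fst ` set w"
  with assms(1) have "g \<in> basis_stabilizer S"
    by blast
  then show "of_bool (inv\<^bsub>GL_group\<^esub> g *v u \<in> Vs) = (of_bool (u \<in> Vs) :: real)"
    by (simp add: basis_stabilizer_inv_mult_vec_mem_iff[OF _ assms(2)])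
qed

lemma coord_supp_axis [simp]: "coord_supp (axis j 1 :: 'a::zero_neq_one^'n) = {j}"
  by (auto simp: coord_supp_def axis_def)

lemma escaping_vecs_insert:
  assumes "j \<notin> F" "j \<notin> M"
  shows "escaping_vecs F (insert j M) = escaping_vecs F M \<union> pivot_vecs j M"
    and "escaping_vecs F M \<inter> pivot_vecs j M = {}"
  using assms by (auto simp: escaping_vecs_def pivot_vecs_def coord_supp_def)

text \<open>A swap moves \<open>e\<^sub>c\<close> to \<open>e\<^sub>j\<close> with probability \<open>p\<close>; the word \<open>w0\<close> fixes \<open>e\<^sub>j\<close> and the
  word \<open>wn\<close> fixes every vector supported in \<open>M\<close>, so the two contributions just add up, and \<open>p\<close>
  is chosen to give them equal densities.\<close>

lemma word_uniform_on_escaping_vecs_insert: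
  fixes c j :: "'n::finite" and w0 wn :: "(('a::field^'n^'n) \<times> real) list"
  assumes "c \<notin> F" "c \<in> M" "j \<notin> F" "j \<notin> M" and "C1 > 0" "C2 > 0"
    and w0: "set w0 \<subseteq> basis_stabilizer (F \<union> - M) \<times> {0..1}"
    and w0_dist: "\<And>v. vec_dist w0 (\<lambda>u. of_bool (u = axis c 1)) v = C1 * of_bool (v \<in> escaping_vecs F M)"
    and wn: "set wn \<subseteq> basis_stabilizer (- {j}) \<times> {0..1}"
    and wn_dist: "\<And>v. vec_dist wn (\<lambda>u. of_bool (u = axis j 1)) v = C2 * of_bool (v \<in> pivot_vecs j M)"
  defines "w \<equiv> wn @ w0 @ [(swap_mat c j, C1 / (C1 + C2))]"
  shows "set w \<subseteq> basis_stabilizer (F \<union> - insert j M) \<times> {0..1}"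
    and "vec_dist w (\<lambda>u. of_bool (u = axis c 1)) v
           = C1 * C2 / (C1 + C2) * of_bool (v \<in> escaping_vecs F (insert j M))"
proof -
  let ?\<delta> = "\<lambda>i (u :: 'a^'n). of_bool (u = axis i 1) :: real"
  define p where "p = C1 / (C1 + C2)"
  have w_eq: "w = wn @ w0 @ [(swap_mat c j, p)]"
    by (simp add: w_def p_def)
  have "0 \<le> p" "p \<le> 1"
    using \<open>C1 > 0\<close> \<open>C2 > 0\<close> by (simp_all add: p_def)
  have "basis_stabilizer (- {j}) \<subseteq> basis_stabilizer (F \<union> - insert j M)"
       "basis_stabilizer (F \<union> - M) \<subseteq> basis_stabilizer (F \<union> - insert j M)"
    using \<open>j \<notin> F\<close> by (auto intro!: basis_stabilizer_antimono)
  moreover have "swap_mat c j \<in> basis_stabilizer (F \<union> - insert j M)"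
    using \<open>c \<notin> F\<close> \<open>j \<notin> F\<close> \<open>c \<in> M\<close> by (intro swap_mat_basis_stabilizer) auto
  ultimately show "set w \<subseteq> basis_stabilizer (F \<union> - insert j M) \<times> {0..1}"
    using wn w0 \<open>0 \<le> p\<close> \<open>p \<le> 1\<close> by (auto simp: w_eq)
  have "swap_mat c j *v u = axis c 1 \<longleftrightarrow> u = axis j 1" for u :: "'a^'n"
    by (auto simp: vec_eq_iff axis_def)
  then have swap: "vec_dist [(swap_mat c j, p)] (?\<delta> c) = (\<lambda>u. (1 - p) * ?\<delta> c u + p * ?\<delta> j u)"
    by (simp add: fun_eq_iff swap_mat_GL)
  have "fst ` set w0 \<subseteq> basis_stabilizer (F \<union> - M)" "fst ` set wn \<subseteq> basis_stabilizer (- {j})"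
    using w0 wn by auto
  moreover have "coord_supp (axis j 1 :: 'a^'n) \<subseteq> F \<union> - M"
    using \<open>j \<notin> M\<close> by simp
  moreover have "coord_supp u \<subseteq> - {j}" if "u \<in> escaping_vecs F M" for u :: "'a^'n"
    using that \<open>j \<notin> M\<close> by (auto simp: escaping_vecs_def)
  ultimately have w0_fixes: "vec_dist w0 (?\<delta> j) u = ?\<delta> j u"
    and wn_fixes: "vec_dist wn (\<lambda>u. of_bool (u \<in> escaping_vecs F M)) u = of_bool (u \<in> escaping_vecs F M)"
    for u
    using vec_dist_indicator_invariant[of w0 "F \<union> - M" "{axis j 1}" u]
      vec_dist_indicator_invariant[of wn "- {j}" "escaping_vecs F M" u]
    by auto
  have after_w0: "vec_dist w0 (vec_dist [(swap_mat c j, p)] (?\<delta> c))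
      = (\<lambda>u. (1 - p) * C1 * of_bool (u \<in> escaping_vecs F M) + p * ?\<delta> j u)"
    by (simp add: fun_eq_iff swap orbit_dist_linear w0_dist w0_fixes)
  have "vec_dist w (?\<delta> c) v
      = (1 - p) * C1 * of_bool (v \<in> escaping_vecs F M) + p * C2 * of_bool (v \<in> pivot_vecs j M)"
    by (simp add: w_eq orbit_dist_append after_w0 orbit_dist_linear wn_fixes wn_dist)
  moreover have weights: "(1 - p) * C1 = C1 * C2 / (C1 + C2)" "p * C2 = C1 * C2 / (C1 + C2)"
    using \<open>C1 > 0\<close> \<open>C2 > 0\<close> by (simp_all add: p_def field_simps)
  ultimately show "vec_dist w (?\<delta> c) v = C1 * C2 / (C1 + C2) * of_bool (v \<in> escaping_vecs F (insert j M))"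
    using escaping_vecs_insert[OF \<open>j \<notin> F\<close> \<open>j \<notin> M\<close>] by (auto simp: weights)
qed

lemma ex_word_uniform_on_escaping_vecs:
  fixes c :: "'n::finite"
  assumes card: "CARD('a::{field,finite}) - 1 = 2 ^ m" and "c \<notin> F"
  shows "\<exists>(w :: (('a^'n^'n) \<times> real) list) C. set w \<subseteq> basis_stabilizer F \<times> {0..1} \<and>
           (\<forall>v. vec_dist w (\<lambda>u. of_bool (u = axis c 1)) v = C * of_bool (v \<in> escaping_vecs F UNIV))"
proof -
  have spread: "\<exists>(w :: (('a^'n^'n) \<times> real) list) C. C > 0 \<and>
          set w \<subseteq> basis_stabilizer (F \<union> - (insert c F \<union> D)) \<times> {0..1} \<and>
          (\<forall>v. vec_dist w (\<lambda>u. of_bool (u = axis c 1)) v = C * of_bool (v \<in> escaping_vecs F (insert c F \<union> D)))"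
    if "finite D" for D
    using that
  proof (induction D rule: finite_induct)
    case empty
    obtain w :: "(('a^'n^'n) \<times> real) list" and C where "C > 0"
      and w: "set w \<subseteq> basis_stabilizer (- {c}) \<times> {0..1}"
      and w_dist: "\<And>v. vec_dist w (\<lambda>u. of_bool (u = axis c 1)) v = C * of_bool (v \<in> pivot_vecs c F)"
      using ex_word_uniform_on_pivot_vecs[OF card \<open>c \<notin> F\<close>] by blast
    have "basis_stabilizer (- {c}) \<subseteq> basis_stabilizer (F \<union> - (insert c F \<union> {}))"
      using \<open>c \<notin> F\<close> by (intro basis_stabilizer_antimono) auto
    moreover have "escaping_vecs F (insert c F \<union> {}) = pivot_vecs c F"
      using escaping_vecs_insert[OF \<open>c \<notin> F\<close> \<open>c \<notin> F\<close>] by (simp add: escaping_vecs_def)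
    ultimately show ?case
      using \<open>C > 0\<close> w w_dist by (intro exI[of _ w] exI[of _ C]) auto
  next
    case (insert j D)
    define M where "M = insert c F \<union> D"
    show ?case
    proof (cases "j \<in> M")
      case True
      then have "insert c F \<union> insert j D = insert c F \<union> D"
        by (auto simp: M_def)
      then show ?thesis
        using insert.IH by (simp only:)
    next
      case False
      have "j \<notin> F" "c \<in> M" and M_insert: "insert c F \<union> insert j D = insert j M"
        using False by (auto simp: M_def)
      obtain w0 :: "(('a^'n^'n) \<times> real) list" and C1 where "C1 > 0"
        and w0: "set w0 \<subseteq> basis_stabilizer (F \<union> - M) \<times> {0..1}"
        and w0_dist: "\<And>v. vec_dist w0 (\<lambda>u. of_bool (u = axis c 1)) v = C1 * of_bool (v \<in> escaping_vecs F M)"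
        using insert.IH unfolding M_def by blast
      obtain wn :: "(('a^'n^'n) \<times> real) list" and C2 where "C2 > 0"
        and wn: "set wn \<subseteq> basis_stabilizer (- {j}) \<times> {0..1}"
        and wn_dist: "\<And>v. vec_dist wn (\<lambda>u. of_bool (u = axis j 1)) v = C2 * of_bool (v \<in> pivot_vecs j M)"
        using ex_word_uniform_on_pivot_vecs[OF card False] by blast
      note step = word_uniform_on_escaping_vecs_insert[OF \<open>c \<notin> F\<close> \<open>c \<in> M\<close> \<open>j \<notin> F\<close> False
          \<open>C1 > 0\<close> \<open>C2 > 0\<close> w0 w0_dist wn wn_dist]
      show ?thesis
        unfolding M_insert using step \<open>C1 > 0\<close> \<open>C2 > 0\<close>
        by (intro exI[of _ "wn @ w0 @ [(swap_mat c j, C1 / (C1 + C2))]"] exI[of _ "C1 * C2 / (C1 + C2)"]) simp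
    qed
  qed
  have "\<exists>(w :: (('a^'n^'n) \<times> real) list) C. C > 0 \<and> set w \<subseteq> basis_stabilizer F \<times> {0..1} \<and>
          (\<forall>v. vec_dist w (\<lambda>u. of_bool (u = axis c 1)) v = C * of_bool (v \<in> escaping_vecs F UNIV))"
    using spread[of UNIV] by simp
  then show ?thesis
    by blast
qed

section \<open>Sufficiency\<close>

lemma coset_mass_basis_stabilizer:
  fixes W :: "(('a::{field,finite}^'n::finite^'n) \<times> real) list"
  assumes W: "fst ` set W \<subseteq> basis_stabilizer F" and "c \<notin> F"
    and W_dist: "\<And>v. vec_dist W (\<lambda>u. of_bool (u = axis c 1)) v = C * of_bool (v \<in> escaping_vecs F UNIV)"
    and h: "h \<in> basis_stabilizer F"
  shows "(\<Sum>y\<in>carrier GL_group. word_dist GL_group W y *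
            of_bool (inv\<^bsub>GL_group\<^esub> y \<otimes>\<^bsub>GL_group\<^esub> h \<in> basis_stabilizer (insert c F))) = C"
proof -
  interpret GL: group "GL_group :: ('a^'n^'n) monoid"
    by (rule group_GL_group)
  have H: "subgroup (basis_stabilizer F) (GL_group :: ('a^'n^'n) monoid)"
    by (rule basis_stabilizer_subgroup)
  have W_GL: "fst ` set W \<subseteq> carrier GL_group"
    using W subgroup.subset[OF H] by blast
  have "word_dist GL_group W y * of_bool (inv\<^bsub>GL_group\<^esub> y \<otimes>\<^bsub>GL_group\<^esub> h \<in> basis_stabilizer (insert c F))
      = word_dist GL_group W y * of_bool (inv\<^bsub>GL_group\<^esub> y *v (h *v axis c 1) = axis c 1)"
    if y: "y \<in> carrier GL_group" for y
  proof (cases "y \<in> basis_stabilizer F")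
    case True
    then have "inv\<^bsub>GL_group\<^esub> y \<otimes>\<^bsub>GL_group\<^esub> h \<in> basis_stabilizer F"
      using h subgroup.m_inv_closed[OF H] subgroup.m_closed[OF H] by blast
    then show ?thesis
      by (simp add: basis_stabilizer_insert matrix_vector_mul_assoc)
  next
    case False
    then show ?thesis
      using GL.word_dist_eq_0_outside_subgroup[OF H W] y by simp
  qed
  then have "(\<Sum>y\<in>carrier GL_group. word_dist GL_group W y *
               of_bool (inv\<^bsub>GL_group\<^esub> y \<otimes>\<^bsub>GL_group\<^esub> h \<in> basis_stabilizer (insert c F)))
      = (\<Sum>y\<in>carrier GL_group. word_dist GL_group W y * of_bool (inv\<^bsub>GL_group\<^esub> y *v (h *v axis c 1) = axis c 1))"
    by (rule sum.cong[OF refl])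
  also have "\<dots> = vec_dist W (\<lambda>u. of_bool (u = axis c 1)) (h *v axis c 1)"
    by (rule vec_dist_eq_sum[OF W_GL, symmetric])
  also have "\<dots> = C"
    using W_dist basis_stabilizer_mult_axis_escaping[OF h \<open>c \<notin> F\<close>] by simp
  finally show ?thesis .
qed

text \<open>Induction on the set \<open>D\<close> of indices that are not fixed, i.e. down the chain of stabilisers.\<close>

lemma ex_word_uniform_on_basis_stabilizer:
  assumes card: "CARD('a::{field,finite}) - 1 = 2 ^ m"
  shows "\<exists>(R :: (('a^'n::finite^'n) \<times> real) list) c. set R \<subseteq> carrier GL_group \<times> {0..1} \<and>
           (\<forall>A\<in>carrier GL_group. word_dist GL_group R A = c * of_bool (A \<in> basis_stabilizer (- D)))"
proof -
  interpret GL: group "GL_group :: ('a^'n^'n) monoid"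
    by (rule group_GL_group)
  have "finite D"
    by simp
  then show ?thesis
  proof (induction D rule: finite_induct)
    case empty
    show ?case
      by (intro exI[of _ "[]"] exI[of _ 1]) (simp add: basis_stabilizer_UNIV)
  next
    case (insert c D)
    define F where "F = - insert c D"
    have "c \<notin> F" and insert_c_F: "insert c F = - D"
      using insert.hyps(2) by (auto simp: F_def)
    obtain R :: "(('a^'n^'n) \<times> real) list" and c0
      where R: "set R \<subseteq> carrier GL_group \<times> {0..1}"
        and R_dist: "\<And>A. A \<in> carrier GL_group \<Longrightarrow> word_dist GL_group R A = c0 * of_bool (A \<in> basis_stabilizer (insert c F))"
      using insert.IH unfolding insert_c_F by blast
    obtain W :: "(('a^'n^'n) \<times> real) list" and C
      where W: "set W \<subseteq> basis_stabilizer F \<times> {0..1}"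
        and W_dist: "\<And>v. vec_dist W (\<lambda>u. of_bool (u = axis c 1)) v = C * of_bool (v \<in> escaping_vecs F UNIV)"
      using ex_word_uniform_on_escaping_vecs[OF card \<open>c \<notin> F\<close>] by blast
    have W_letters: "fst ` set W \<subseteq> basis_stabilizer F"
      using W by auto
    have "word_dist GL_group (W @ R) A = c0 * C * of_bool (A \<in> basis_stabilizer F)"
      if "A \<in> carrier GL_group" for A
    proof (rule GL.word_dist_append_uniform_cosets)
      show "subgroup (basis_stabilizer F) GL_group" "subgroup (basis_stabilizer (insert c F)) GL_group"
        by (rule basis_stabilizer_subgroup)+
      show "basis_stabilizer (insert c F) \<subseteq> basis_stabilizer F"
        by (rule basis_stabilizer_antimono) auto
      show "(\<Sum>y\<in>carrier GL_group. word_dist GL_group W y *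
              of_bool (inv\<^bsub>GL_group\<^esub> y \<otimes>\<^bsub>GL_group\<^esub> h \<in> basis_stabilizer (insert c F))) = C"
        if "h \<in> basis_stabilizer F" for h
        using coset_mass_basis_stabilizer[OF W_letters \<open>c \<notin> F\<close> W_dist that] .
    qed (use W_letters R_dist that in simp_all)
    moreover have "set (W @ R) \<subseteq> carrier GL_group \<times> {0..1}"
      using W R by (auto simp: basis_stabilizer_def)
    ultimately show ?case
      unfolding F_def by blast
  qed
qed

lemma power_of_2_imp_mixable_GL:
  assumes "CARD('a::{field,finite}) - 1 = 2 ^ m"
  shows "mixable (GL_group :: ('a^'n::finite^'n) monoid)"
proof -
  interpret GL: group "GL_group :: ('a^'n^'n) monoid"
    by (rule group_GL_group)
  obtain R :: "(('a^'n^'n) \<times> real) list" and c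
    where R: "set R \<subseteq> carrier GL_group \<times> {0..1}"
      and R_stab: "\<forall>A\<in>carrier GL_group. word_dist GL_group R A = c * of_bool (A \<in> basis_stabilizer (- UNIV))"
    using ex_word_uniform_on_basis_stabilizer[OF assms] by blast
  then have R_dist: "\<And>A. A \<in> carrier GL_group \<Longrightarrow> word_dist GL_group R A = c"
    by (simp add: basis_stabilizer_empty)
  have "c = 1 / real (card (carrier (GL_group :: ('a^'n^'n) monoid)))"
    using R R_dist by (intro GL.word_dist_const_eq_uniform) auto
  with R R_dist show ?thesis
    unfolding GL.mixable_iff_uniform_word by blast
qed

theorem mainTheorem7:
  shows "mixable (GL_group :: ('a::{field,finite} ^ 'n ^ 'n) monoid)
         \<longleftrightarrow> (\<exists>m::nat. CARD('a) - 1 = 2 ^ m)"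
proof
  assume "mixable (GL_group :: ('a^'n^'n) monoid)"
  then show "\<exists>m. CARD('a) - 1 = 2 ^ m"
    by (rule mixable_GL_imp_power_of_2)
next
  assume "\<exists>m. CARD('a) - 1 = 2 ^ m"
  then obtain m where "CARD('a) - 1 = 2 ^ m" ..
  then show "mixable (GL_group :: ('a^'n^'n) monoid)"
    by (rule power_of_2_imp_mixable_GL)
qed

end
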